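(* Let $\alpha$ be an infinite ordinal, $V={}^\alpha\alpha^{(Id)}$, and let $\mathfrak B$ be a subalgebra of $\wp(V)=\langle\mathcal P(V);\cap,-,S^i_j,S_{ij}\rangle_{i\neq j<\alpha}$. Then there exist a set $M$, an injection $\epsilon:\alpha\to M$, a subalgebra $\mathfrak C$ of the full set algebra $\langle\mathcal P({}^\alpha M);\cap,-,S^i_j,S_{ij}\rangle_{i\neq j<\alpha}$ and an isomorphism $g:\mathfrak B\to\mathfrak C$ such that $g(X)\cap\{\epsilon\circ s:s\in V\}=\{\epsilon\circ s:s\in X\}$ for every $X\in B$ (i.e. $g$ is a strong sub-base-isomorphism).
   Context: ${}^\alpha\alpha^{(Id)}=\{s\in{}^\alpha\alpha:|\{i<\alpha:s_i\neq i\}|<\omega\}$. For $i\neq j<\alpha$, $[i,j]$ is the transposition swapping $i,j$ and $[i/j]:\alpha\to\alpha$ sends $i$ to $j$ and fixes all other points. For a set $W$ of $\alpha$-sequences closed under $s\mapsto s\circ[i,j]$ and $s\mapsto s\circ[i/j]$, the algebra on $\mathcal P(W)$ has complement relative to $W$, $S^i_j(X)=\{q\in W:q\circ[i/j]\in X\}$ and $S_{ij}(X)=\{q\in W:q\circ[i,j]\in X\}$. *)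

theory Defs
  imports Main
begin

text \<open>The index set alpha is rendered as an (infinite) type 'a; alpha-sequences
  over a base set M are functions 'a => 'b with values in M.\<close>

definition transp :: "'a \<Rightarrow> 'a \<Rightarrow> 'a \<Rightarrow> 'a" where
  "transp i j = (\<lambda>k. if k = i then j else if k = j then i else k)"

definition repl :: "'a \<Rightarrow> 'a \<Rightarrow> 'a \<Rightarrow> 'a" where
  "repl i j = (\<lambda>k. if k = i then j else k)"

definition weak_id_space :: "('a \<Rightarrow> 'a) set" where
  "weak_id_space = {s. finite {i. s i \<noteq> i}}"

definition full_space :: "'b set \<Rightarrow> ('a \<Rightarrow> 'b) set" where
  "full_space M = {s. \<forall>i. s i \<in> M}"

definition subst_op :: "('a \<Rightarrow> 'b) set \<Rightarrow> 'a \<Rightarrow> 'a \<Rightarrow> ('a \<Rightarrow> 'b) set \<Rightarrow> ('a \<Rightarrow> 'b) set" where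
  "subst_op W i j X = {q \<in> W. q \<circ> repl i j \<in> X}"

definition swap_op :: "('a \<Rightarrow> 'b) set \<Rightarrow> 'a \<Rightarrow> 'a \<Rightarrow> ('a \<Rightarrow> 'b) set \<Rightarrow> ('a \<Rightarrow> 'b) set" where
  "swap_op W i j X = {q \<in> W. q \<circ> transp i j \<in> X}"

definition set_subalgebra :: "('a \<Rightarrow> 'b) set \<Rightarrow> ('a \<Rightarrow> 'b) set set \<Rightarrow> bool" where
  "set_subalgebra W B \<longleftrightarrow> B \<subseteq> Pow W \<and>
     (\<forall>X\<in>B. \<forall>Y\<in>B. X \<inter> Y \<in> B) \<and>
     (\<forall>X\<in>B. W - X \<in> B) \<and>
     (\<forall>X\<in>B. \<forall>i j. i \<noteq> j \<longrightarrow> subst_op W i j X \<in> B \<and> swap_op W i j X \<in> B)"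

definition set_alg_iso ::
  "('a \<Rightarrow> 'b) set \<Rightarrow> ('a \<Rightarrow> 'b) set set \<Rightarrow> ('a \<Rightarrow> 'c) set \<Rightarrow> ('a \<Rightarrow> 'c) set set
   \<Rightarrow> (('a \<Rightarrow> 'b) set \<Rightarrow> ('a \<Rightarrow> 'c) set) \<Rightarrow> bool" where
  "set_alg_iso W B W' C g \<longleftrightarrow> bij_betw g B C \<and>
     (\<forall>X\<in>B. \<forall>Y\<in>B. g (X \<inter> Y) = g X \<inter> g Y) \<and>
     (\<forall>X\<in>B. g (W - X) = W' - g X) \<and>
     (\<forall>X\<in>B. \<forall>i j. i \<noteq> j \<longrightarrow>
        g (subst_op W i j X) = subst_op W' i j (g X) \<and>
        g (swap_op W i j X) = swap_op W' i j (g X))"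

end

theory Submission
  imports Defs
begin

text \<open>Fix an ultrafilter \<open>U\<close> on the finite subsets of \<open>\<alpha>\<close> refining the filter of cofinal
  finite sets. An arbitrary sequence \<open>s\<close> is approximated by its truncations \<open>s\<restriction>F\<close>, which
  agree with \<open>s\<close> on the finite set \<open>F\<close> and are the identity elsewhere, so lie in \<open>V\<close>. Putting
  \<open>s \<in> g X\<close> iff \<open>s\<restriction>F \<in> X\<close> for \<open>U\<close>-almost all \<open>F\<close> gives a map into \<open>\<wp>(\<^sup>\<alpha>\<alpha>)\<close>:
  it preserves intersections and complements because \<open>U\<close> is an ultrafilter, and it commutes
  with \<open>S\<^sup>i\<^sub>j\<close>, \<open>S\<^sub>i\<^sub>j\<close> because truncation commutes with \<open>[i/j]\<close>, \<open>[i,j]\<close> as soon as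
  \<open>i, j \<in> F\<close>, which holds almost everywhere. A sequence in \<open>V\<close> equals all its truncations to
  large enough \<open>F\<close>, so \<open>g X \<inter> V = X\<close>; hence \<open>g\<close> is injective and a strong
  sub-base-isomorphism with \<open>M = \<alpha>\<close> and \<open>\<epsilon> = id\<close>.\<close>

definition ultrafilter :: "'a filter \<Rightarrow> bool" where
  "ultrafilter F \<longleftrightarrow> F \<noteq> bot \<and> (\<forall>P. eventually P F \<or> eventually (\<lambda>x. \<not> P x) F)"

lemma ultrafilter_eventually_not:
  assumes "ultrafilter F"
  shows "eventually (\<lambda>x. \<not> P x) F \<longleftrightarrow> \<not> eventually P F"
proof -
  have "\<not> (eventually (\<lambda>x. \<not> P x) F \<and> eventually P F)"
    using assms eventually_conj[of "\<lambda>x. \<not> P x" F P]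
    by (auto simp: ultrafilter_def trivial_limit_def)
  with assms show ?thesis
    by (auto simp: ultrafilter_def)
qed

lemma maximal_proper_filter_ultrafilter:
  assumes "F \<noteq> bot"
    and maximal: "\<And>G. G \<noteq> bot \<Longrightarrow> G \<le> F \<Longrightarrow> F = G"
  shows "ultrafilter F"
  unfolding ultrafilter_def
proof (intro conjI allI disjCI)
  fix P assume "\<not> eventually (\<lambda>x. \<not> P x) F"
  then have "inf F (principal {x. P x}) \<noteq> bot"
    by (simp add: trivial_limit_def eventually_inf_principal)
  then have F: "F = inf F (principal {x. P x})"
    by (rule maximal) simp
  show "eventually P F"
    by (subst F) (simp add: eventually_inf_principal)
qed fact

lemma ultrafilter_refinement_exists:
  fixes F :: "'a filter"
  assumes "F \<noteq> bot"
  shows "\<exists>U\<le>F. ultrafilter U"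
proof -
  let ?R = "{(G, H). H \<noteq> bot \<and> H \<le> G \<and> G \<le> F}"
  have field_R: "Field ?R = {G. G \<noteq> bot \<and> G \<le> F}"
    by (auto simp: Field_def bot_unique)
  have "\<exists>U\<in>Field ?R. \<forall>G\<in>Field ?R. (U, G) \<in> ?R \<longrightarrow> G = U"
  proof (rule Zorns_po_lemma)
    show "Partial_order ?R"
      by (auto simp: partial_order_on_def preorder_on_def
          antisym_def refl_on_def trans_def Field_def bot_unique)
  next
    fix C assume C: "C \<in> Chains ?R"
    have Inf_C: "Inf C \<noteq> bot" "Inf C \<le> F" if "C \<noteq> {}"
    proof -
      \<comment> \<open>the infimum of a chain of proper filters is proper since the chain is directed\<close>
      from C that have "Inf C = bot \<longleftrightarrow> (\<exists>G\<in>C. G = bot)"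
        unfolding trivial_limit_def by (intro eventually_Inf_base) (auto simp: Chains_def)
      with C show "Inf C \<noteq> bot"
        by (auto simp: Chains_def)
      from that obtain G where "G \<in> C" by auto
      with C show "Inf C \<le> F"
        by (auto intro!: Inf_lower2[of G] simp: Chains_def)
    qed
    have "inf F (Inf C) = (if C = {} then F else Inf C)"
      using Inf_C by (simp add: inf_absorb2)
    with C Inf_C assms show "\<exists>U\<in>Field ?R. \<forall>G\<in>C. (G, U) \<in> ?R"
      unfolding field_R
      by (intro bexI[of _ "inf F (Inf C)"]) (auto intro: Inf_lower simp: Chains_def)
  qed
  then obtain U where "U \<noteq> bot" "U \<le> F" "\<And>G. G \<noteq> bot \<Longrightarrow> G \<le> U \<Longrightarrow> G = U"
    unfolding field_R by auto
  then show ?thesis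
    by (metis maximal_proper_filter_ultrafilter)
qed

definition trunc :: "('a \<Rightarrow> 'a) \<Rightarrow> 'a set \<Rightarrow> 'a \<Rightarrow> 'a" where
  "trunc s F = (\<lambda>k. if k \<in> F then s k else k)"

lemma trunc_in_weak_id_space: "finite F \<Longrightarrow> trunc s F \<in> weak_id_space"
  unfolding weak_id_space_def trunc_def
  by (auto intro: finite_subset[of _ F])

lemma trunc_comp_repl: "i \<in> F \<Longrightarrow> j \<in> F \<Longrightarrow> trunc (s \<circ> repl i j) F = trunc s F \<circ> repl i j"
  unfolding trunc_def repl_def by (auto simp: fun_eq_iff)

lemma trunc_comp_transp: "i \<in> F \<Longrightarrow> j \<in> F \<Longrightarrow> trunc (s \<circ> transp i j) F = trunc s F \<circ> transp i j"
  unfolding trunc_def transp_def by (auto simp: fun_eq_iff)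

lemma trunc_eq_self: "{k. s k \<noteq> k} \<subseteq> F \<Longrightarrow> trunc s F = s"
  unfolding trunc_def by (force simp: fun_eq_iff)

definition ultra_extension :: "'a set filter \<Rightarrow> ('a \<Rightarrow> 'a) set \<Rightarrow> ('a \<Rightarrow> 'a) set" where
  "ultra_extension U X = {s. eventually (\<lambda>F. trunc s F \<in> X) U}"

locale cofinal_ultrafilter =
  fixes U :: "'a set filter"
  assumes le_finite_sets: "U \<le> finite_sets_at_top"
    and ultra: "ultrafilter U"

lemma cofinal_ultrafilter_exists: "\<exists>U. cofinal_ultrafilter U"
  using ultrafilter_refinement_exists[of "finite_sets_at_top :: 'a set filter"]
  by (auto intro: cofinal_ultrafilter.intro)

context cofinal_ultrafilter
begin

lemma eventually_finite_superset: "finite A \<Longrightarrow> eventually (\<lambda>F. finite F \<and> A \<subseteq> F) U"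
  by (rule filter_leD[OF le_finite_sets]) (auto simp: eventually_finite_subsets_at_top)

lemma ultra_extension_Int: "ultra_extension U (X \<inter> Y) = ultra_extension U X \<inter> ultra_extension U Y"
  by (auto simp: ultra_extension_def eventually_conj_iff)

lemma ultra_extension_Diff:
  "ultra_extension U (weak_id_space - X) = UNIV - ultra_extension U X"
proof -
  have "eventually (\<lambda>F. trunc s F \<in> weak_id_space - X) U
        \<longleftrightarrow> eventually (\<lambda>F. trunc s F \<notin> X) U" for s
    by (rule eventually_subst, rule eventually_mono[OF eventually_finite_superset[of "{}"]])
      (auto simp: trunc_in_weak_id_space)
  then show ?thesis
    by (auto simp: ultra_extension_def ultrafilter_eventually_not[OF ultra])
qed

lemma ultra_extension_subst_op:
  "ultra_extension U (subst_op weak_id_space i j X) = subst_op UNIV i j (ultra_extension U X)"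
proof -
  have "eventually (\<lambda>F. trunc s F \<in> subst_op weak_id_space i j X) U
        \<longleftrightarrow> eventually (\<lambda>F. trunc (s \<circ> repl i j) F \<in> X) U" for s
    by (rule eventually_subst, rule eventually_mono[OF eventually_finite_superset[of "{i, j}"]])
      (auto simp: subst_op_def trunc_in_weak_id_space trunc_comp_repl)
  then show ?thesis
    by (auto simp: ultra_extension_def subst_op_def)
qed

lemma ultra_extension_swap_op:
  "ultra_extension U (swap_op weak_id_space i j X) = swap_op UNIV i j (ultra_extension U X)"
proof -
  have "eventually (\<lambda>F. trunc s F \<in> swap_op weak_id_space i j X) U
        \<longleftrightarrow> eventually (\<lambda>F. trunc (s \<circ> transp i j) F \<in> X) U" for s
    by (rule eventually_subst, rule eventually_mono[OF eventually_finite_superset[of "{i, j}"]])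
      (auto simp: swap_op_def trunc_in_weak_id_space trunc_comp_transp)
  then show ?thesis
    by (auto simp: ultra_extension_def swap_op_def)
qed

lemma ultra_extension_Int_weak_id_space:
  assumes "X \<subseteq> weak_id_space"
  shows "ultra_extension U X \<inter> weak_id_space = X"
proof -
  have "eventually (\<lambda>F. trunc s F \<in> X) U \<longleftrightarrow> s \<in> X" if "s \<in> weak_id_space" for s
  proof -
    have "eventually (\<lambda>F. trunc s F \<in> X) U \<longleftrightarrow> eventually (\<lambda>F. s \<in> X) U"
      using that unfolding weak_id_space_def
      by (intro eventually_subst eventually_mono[OF eventually_finite_superset])
        (auto simp: trunc_eq_self)
    then show ?thesis
      using ultra by (simp add: ultrafilter_def eventually_const_iff)
  qed
  with assms show ?thesis
    by (auto simp: ultra_extension_def)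
qed

end

definition set_alg_hom ::
  "('a \<Rightarrow> 'b) set \<Rightarrow> ('a \<Rightarrow> 'c) set \<Rightarrow> (('a \<Rightarrow> 'b) set \<Rightarrow> ('a \<Rightarrow> 'c) set) \<Rightarrow> bool" where
  "set_alg_hom W W' g \<longleftrightarrow>
     (\<forall>X Y. g (X \<inter> Y) = g X \<inter> g Y) \<and> (\<forall>X. g (W - X) = W' - g X) \<and>
     (\<forall>X i j. g (subst_op W i j X) = subst_op W' i j (g X) \<and>
              g (swap_op W i j X) = swap_op W' i j (g X))"

lemma set_subalgebra_image:
  assumes hom: "set_alg_hom W W' g" and B: "set_subalgebra W B" and "g ` B \<subseteq> Pow W'"
  shows "set_subalgebra W' (g ` B)"
  unfolding set_subalgebra_def
proof (intro conjI ballI allI impI)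
  fix X Y assume "X \<in> g ` B" "Y \<in> g ` B"
  then obtain X0 Y0 where "X0 \<in> B" "Y0 \<in> B" "X = g X0" "Y = g Y0" by auto
  with hom B show "X \<inter> Y \<in> g ` B"
    unfolding set_subalgebra_def set_alg_hom_def by (auto intro!: image_eqI[of _ _ "X0 \<inter> Y0"])
next
  fix X assume "X \<in> g ` B"
  then obtain X0 where "X0 \<in> B" "X = g X0" by auto
  with hom B show "W' - X \<in> g ` B"
    unfolding set_subalgebra_def set_alg_hom_def by (auto intro!: image_eqI[of _ _ "W - X0"])
next
  fix X and i j :: 'a assume "X \<in> g ` B" "i \<noteq> j"
  then obtain X0 where "X0 \<in> B" "X = g X0" by auto
  with hom B \<open>i \<noteq> j\<close> show "subst_op W' i j X \<in> g ` B"
    unfolding set_subalgebra_def set_alg_hom_def by (auto intro!: image_eqI[of _ _ "subst_op W i j X0"])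
  from \<open>X0 \<in> B\<close> \<open>X = g X0\<close> hom B \<open>i \<noteq> j\<close> show "swap_op W' i j X \<in> g ` B"
    unfolding set_subalgebra_def set_alg_hom_def by (auto intro!: image_eqI[of _ _ "swap_op W i j X0"])
qed (use assms(3) in auto)

lemma set_alg_iso_image:
  assumes "set_alg_hom W W' g" "inj_on g B"
  shows "set_alg_iso W B W' (g ` B) g"
  using assms by (simp add: set_alg_iso_def set_alg_hom_def inj_on_imp_bij_betw)

lemma full_space_UNIV [simp]: "full_space UNIV = UNIV"
  by (simp add: full_space_def)

lemma (in cofinal_ultrafilter) set_alg_hom_ultra_extension:
  "set_alg_hom weak_id_space UNIV (ultra_extension U)"
  by (simp add: set_alg_hom_def ultra_extension_Int ultra_extension_Diff
      ultra_extension_subst_op ultra_extension_swap_op)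

theorem theorem4p26:
  fixes B :: "('a \<Rightarrow> 'a) set set"
  assumes "infinite (UNIV :: 'a set)"
    and "set_subalgebra weak_id_space B"
  shows "\<exists>(M :: 'a set) (\<epsilon> :: 'a \<Rightarrow> 'a) C g.
           inj \<epsilon> \<and> range \<epsilon> \<subseteq> M \<and>
           set_subalgebra (full_space M) C \<and>
           set_alg_iso weak_id_space B (full_space M) C g \<and>
           (\<forall>X\<in>B. g X \<inter> ((\<lambda>s. \<epsilon> \<circ> s) ` weak_id_space) = (\<lambda>s. \<epsilon> \<circ> s) ` X)"
proof -
  obtain U :: "'a set filter" where "cofinal_ultrafilter U"
    using cofinal_ultrafilter_exists by blast
  then interpret cofinal_ultrafilter U .
  let ?g = "ultra_extension U"
  have B_sub: "X \<subseteq> weak_id_space" if "X \<in> B" for X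
    using assms(2) that by (auto simp: set_subalgebra_def)
  have restrict: "?g X \<inter> weak_id_space = X" if "X \<in> B" for X
    using B_sub[OF that] by (rule ultra_extension_Int_weak_id_space)
  then have "inj_on ?g B"
    by (metis inj_onI)
  have "inj id \<and> range id \<subseteq> UNIV \<and> set_subalgebra (full_space (UNIV :: 'a set)) (?g ` B) \<and>
      set_alg_iso weak_id_space B (full_space (UNIV :: 'a set)) (?g ` B) ?g \<and>
      (\<forall>X\<in>B. ?g X \<inter> (\<lambda>s. id \<circ> s) ` weak_id_space = (\<lambda>s. id \<circ> s) ` X)"
    using set_subalgebra_image[OF set_alg_hom_ultra_extension assms(2)]
      set_alg_iso_image[OF set_alg_hom_ultra_extension \<open>inj_on ?g B\<close>] restrict
    by auto
  then show ?thesis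
    by (intro exI[where x = UNIV] exI[where x = id] exI[where x = "?g ` B"] exI[where x = ?g])
qed

end
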